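(* Let $r\ge2$ and $m\ge1$ be integers. Then (i) $P\left(-\frac{r-1}{r},-\frac{r-2}{r},\ldots,-\frac{r-m}{r}\right)\,S_m\!\left(r-\frac{t\varphi'(t)}{\varphi(t)}\right)\,Q\left(\frac{r-1}{r},\frac{r-2}{r},\ldots,\frac{r-m}{r}\right)=r\,\mathrm{I}_m$; (ii) $P\left(-\frac{r-1}{r},\ldots,-\frac{r-m}{r}\right)\,\mathrm{diag}(r-1,r-2,\ldots,r-m)\,Q\left(\frac{r-1}{r},\ldots,\frac{r-m}{r}\right)=\mathrm{diag}(r-1,r-2,\ldots,r-m)$.
   Context: $s_1,\dots,s_r$ are independent indeterminates over $\mathbb{Q}$ and $\varphi(t)=1+s_1t+\cdots+s_rt^r$. For $\lambda\in\mathbb{C}$ and $\ell\in\mathbb{Z}$, $\beta_\ell(\lambda)$ is the coefficient of $t^\ell$ in the power series $\varphi(t)^\lambda$ (so $\beta_0(\lambda)=1$, $\beta_\ell(\lambda)=0$ for $\ell<0$). For $\lambda_1,\dots,\lambda_m\in\mathbb{C}$, $P(\lambda_1,\ldots,\lambda_m)$ is the $m\times m$ matrix with $(i,j)$ entry $\beta_{i-j}(\lambda_i)$; for $\mu_1,\dots,\mu_m$, $Q(\mu_1,\ldots,\mu_m)$ is the $m\times m$ matrix with $(i,j)$ entry $\beta_{i-j}(\mu_j)$. For a power series $\psi(t)=a_0+a_1t+\cdots$, $S_m(\psi(t))$ is the $m\times m$ matrix with $(i,j)$ entry $a_{i-j}$ (with $a_i=0$ for $i<0$). $\mathrm{I}_m$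 is the identity matrix. *)

theory Defs
  imports "HOL-Computational_Algebra.Formal_Power_Series" "Jordan_Normal_Form.Matrix"
begin

definition phi_fps :: "(nat \<Rightarrow> 'a::field_char_0) \<Rightarrow> nat \<Rightarrow> 'a fps" where
  "phi_fps s r = 1 + (\<Sum>i=1..r. fps_const (s i) * fps_X ^ i)"

text \<open>phi(t)^lambda = (1+X)^lambda composed with phi - 1 (which has zero constant term).\<close>
definition phi_pow :: "(nat \<Rightarrow> 'a::field_char_0) \<Rightarrow> nat \<Rightarrow> 'a \<Rightarrow> 'a fps" where
  "phi_pow s r lam = fps_binomial lam oo (phi_fps s r - 1)"

definition beta :: "(nat \<Rightarrow> 'a::field_char_0) \<Rightarrow> nat \<Rightarrow> 'a \<Rightarrow> int \<Rightarrow> 'a" where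
  "beta s r lam l = (if l < 0 then 0 else fps_nth (phi_pow s r lam) (nat l))"

text \<open>Matrices with 0-based indices: entry (i,j) is beta_{i-j}(lambda_i), lambda given as a function
  of the 0-based row index.\<close>
definition P_mat :: "(nat \<Rightarrow> 'a::field_char_0) \<Rightarrow> nat \<Rightarrow> (nat \<Rightarrow> 'a) \<Rightarrow> nat \<Rightarrow> 'a mat" where
  "P_mat s r lam m = mat m m (\<lambda>(i,j). beta s r (lam i) (int i - int j))"

definition Q_mat :: "(nat \<Rightarrow> 'a::field_char_0) \<Rightarrow> nat \<Rightarrow> (nat \<Rightarrow> 'a) \<Rightarrow> nat \<Rightarrow> 'a mat" where
  "Q_mat s r mu m = mat m m (\<lambda>(i,j). beta s r (mu j) (int i - int j))"

definition S_mat :: "nat \<Rightarrow> 'a::zero fps \<Rightarrow> 'a mat" where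
  "S_mat m psi = mat m m (\<lambda>(i,j). if j \<le> i then fps_nth psi (i - j) else 0)"

end

(* Write F^a for fps_binomial a oo (F - 1) and L = X F'/F. Since X (F^a)' = a F^a L,
   comparing coefficients of X^n gives [F^c L]_n = (n/c) [F^c]_n, so F^(n/r) (r - L) has
   X^n-coefficient 0 for n > 0.
   All matrices involved are lower triangular with (i,j) entry the (i-j)-th coefficient of a
   series depending only on the row (P) or only on the column (S, Q); their products multiply
   the series, and since exponents add, the (i,k) entry of P S Q is the (i-k)-th coefficient
   of phi^((i-k)/r) (r - L). In (ii), diag(r mu_k) is affine in k and so turns the column
   series phi^mu_k of Q into r mu_k phi^mu_k - X (phi^mu_k)' = mu_k phi^mu_k (r - L), which
   reduces (ii) to the same coefficient identity. *)

theory Submission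
  imports Defs
begin

definition fps_powr :: "'a::field_char_0 fps \<Rightarrow> 'a \<Rightarrow> 'a fps" where
  "fps_powr F a = fps_binomial a oo (F - 1)"

lemma fps_powr_nth_0 [simp]: "fps_nth (fps_powr F a) 0 = 1"
  by (simp add: fps_powr_def)

lemma fps_powr_add:
  assumes "fps_nth F 0 = 1"
  shows "fps_powr F (a + b) = fps_powr F a * fps_powr F b"
  unfolding fps_powr_def fps_binomial_add_mult
  by (rule fps_compose_mult_distrib) (simp add: assms)

lemma fps_binomial_ODE: "(1 + fps_X) * fps_deriv (fps_binomial a) = fps_const a * fps_binomial a"
proof -
  have unit: "fps_nth (1 + fps_X :: 'a fps) 0 \<noteq> 0" by simp
  show ?thesis
    unfolding fps_binomial_deriv fps_divide_unit[OF unit]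
    by (simp add: inverse_mult_eq_1'[OF unit] mult.left_commute)
qed

lemma fps_powr_ODE:
  assumes "fps_nth F 0 = 1"
  shows "F * fps_deriv (fps_powr F a) = fps_const a * fps_powr F a * fps_deriv F"
proof -
  let ?G = "F - 1"
  have G0: "fps_nth ?G 0 = 0" using assms by simp
  have F: "(1 + fps_X) oo ?G = F"
    using G0 by (simp add: fps_compose_add_distrib)
  have "F * fps_deriv (fps_powr F a)
      = ((1 + fps_X) oo ?G) * ((fps_deriv (fps_binomial a) oo ?G) * fps_deriv ?G)"
    unfolding F fps_powr_def fps_compose_deriv[OF G0] ..
  also have "\<dots> = (((1 + fps_X) * fps_deriv (fps_binomial a)) oo ?G) * fps_deriv F"
    by (simp add: fps_compose_mult_distrib[OF G0] mult.assoc)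
  also have "\<dots> = fps_const a * fps_powr F a * fps_deriv F"
    by (simp only: fps_binomial_ODE fps_compose_mult_distrib[OF G0] fps_const_compose fps_powr_def)
  finally show ?thesis .
qed

lemma fps_powr_euler:
  assumes "fps_nth F 0 = 1"
  shows "fps_X * fps_deriv (fps_powr F a) = fps_const a * fps_powr F a * (fps_X * fps_deriv F / F)"
proof -
  have unit: "fps_nth F 0 \<noteq> 0" and "F \<noteq> 0" using assms by auto
  have "fps_X * fps_deriv (fps_powr F a) * F = fps_X * (F * fps_deriv (fps_powr F a))"
    by (simp only: ac_simps)
  also have "\<dots> = fps_const a * fps_powr F a * (fps_X * fps_deriv F)"
    by (simp only: fps_powr_ODE[OF assms] ac_simps)
  also have "\<dots> = fps_const a * fps_powr F a * (fps_X * fps_deriv F / F) * F"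
    by (simp add: fps_divide_unit[OF unit] inverse_mult_eq_1[OF unit] mult.assoc)
  finally show ?thesis using \<open>F \<noteq> 0\<close> by simp
qed

lemma fps_nth_euler: "fps_nth (fps_X * fps_deriv f) n = of_nat n * fps_nth f n"
  by (cases n) simp_all

lemma fps_nth_powr_mult_euler_log_deriv:
  assumes "fps_nth F 0 = 1" and "c \<noteq> 0"
  shows "fps_nth (fps_powr F c * (fps_X * fps_deriv F / F)) n
    = of_nat n / c * fps_nth (fps_powr F c) n"
proof -
  have "of_nat n * fps_nth (fps_powr F c) n = fps_nth (fps_X * fps_deriv (fps_powr F c)) n"
    by (rule fps_nth_euler[symmetric])
  also have "\<dots> = c * fps_nth (fps_powr F c * (fps_X * fps_deriv F / F)) n"
    by (simp only: fps_powr_euler[OF assms(1)] mult.assoc fps_mult_left_const_nth)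
  finally show ?thesis using assms(2) by (simp add: field_simps)
qed

lemma fps_nth_powr_mult_shifted_log_deriv:
  assumes "fps_nth F 0 = 1" and "c \<noteq> 0" and "a + b = of_nat n / c"
  shows "fps_nth (fps_powr F a * fps_powr F b * (fps_const c - fps_X * fps_deriv F / F)) n
    = (if n = 0 then c else 0)"
proof -
  have "fps_powr F a * fps_powr F b = fps_powr F (of_nat n / c)"
    unfolding fps_powr_add[OF assms(1), symmetric] assms(3) ..
  moreover have "fps_nth F 0 \<noteq> 0" using assms(1) by simp
  ultimately show ?thesis
    using fps_nth_powr_mult_euler_log_deriv[OF assms(1), of "of_nat n / c" n] assms(2)
    by (simp add: fps_divide_unit right_diff_distrib fps_mult_right_const_nth)
qed

definition series_mat :: "nat \<Rightarrow> (nat \<Rightarrow> nat \<Rightarrow> 'a::zero fps) \<Rightarrow> 'a mat" where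
  "series_mat m F = mat m m (\<lambda>(i, j). if j \<le> i then fps_nth (F i j) (i - j) else 0)"

lemma series_mat_carrier [simp]: "series_mat m F \<in> carrier_mat m m"
  by (simp add: series_mat_def)

lemma sum_lower_coeffs_mult:
  fixes f g :: "'a::comm_ring_1 fps"
  assumes "i < m"
  shows "(\<Sum>j<m. (if j \<le> i then fps_nth f (i - j) else 0)
                  * (if k \<le> j then fps_nth g (j - k) else 0))
    = (if k \<le> i then fps_nth (f * g) (i - k) else 0)"
proof (cases "k \<le> i")
  case True
  have "(\<Sum>j<m. (if j \<le> i then fps_nth f (i - j) else 0)
                 * (if k \<le> j then fps_nth g (j - k) else 0))
      = (\<Sum>j=k..i. fps_nth f (i - j) * fps_nth g (j - k))"
    using assms by (intro sum.mono_neutral_cong_right) auto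
  also have "\<dots> = (\<Sum>p=0..i-k. fps_nth g p * fps_nth f (i - k - p))"
    using True by (intro sum.reindex_bij_witness[where i = "\<lambda>p. p + k" and j = "\<lambda>j. j - k"]) auto
  also have "\<dots> = fps_nth (f * g) (i - k)"
    by (simp add: fps_mult_nth mult.commute[of f g])
  finally show ?thesis using True by simp
qed (auto intro: sum.neutral)

lemma series_mat_mult:
  fixes F G :: "nat \<Rightarrow> 'a::comm_ring_1 fps"
  shows "series_mat m (\<lambda>i _. F i) * series_mat m (\<lambda>_ k. G k) = series_mat m (\<lambda>i k. F i * G k)"
    (is "?A * ?B = ?C")
proof (rule eq_matI)
  fix i k assume "i < dim_row ?C" "k < dim_col ?C"
  then have "i < m" "k < m" by (simp_all add: series_mat_def)
  then show "(?A * ?B) $$ (i, k) = ?C $$ (i, k)"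
    by (simp add: series_mat_def scalar_prod_def sum_lower_coeffs_mult
        split del: if_split flip: lessThan_atLeast0)
qed (simp_all add: series_mat_def)

lemma mat_diag_mult_series_mat:
  fixes G :: "nat \<Rightarrow> 'a::comm_ring_1 fps"
  assumes "\<And>k l. k \<le> l \<Longrightarrow> d l = d k - of_nat (l - k)"
  shows "mat_diag m d * series_mat m (\<lambda>_ k. G k)
    = series_mat m (\<lambda>_ k. fps_const (d k) * G k - fps_X * fps_deriv (G k))"
  by (rule eq_matI)
    (auto simp: mat_diag_mult_left[of _ m m] series_mat_def assms Suc_diff_Suc of_nat_diff algebra_simps)

lemma series_mat_eq_mat_diag:
  assumes "\<And>i k. k \<le> i \<Longrightarrow> i < m \<Longrightarrow> fps_nth (F i k) (i - k) = (if i = k then d k else 0)"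
  shows "series_mat m F = mat_diag m d"
proof -
  have "fps_nth (F i i) 0 = d i" if "i < m" for i
    using assms[of i i] that by simp
  then show ?thesis
    by (intro eq_matI) (auto simp: series_mat_def mat_diag_def assms)
qed

lemma phi_fps_nth_0: "fps_nth (phi_fps s r) 0 = 1"
  by (simp add: phi_fps_def fps_sum_nth)

lemma beta_diff:
  "beta s r lam (int i - int j) = (if j \<le> i then fps_nth (fps_powr (phi_fps s r) lam) (i - j) else 0)"
  by (auto simp: beta_def phi_pow_def fps_powr_def nat_diff_distrib)

lemma P_mat_eq_series_mat: "P_mat s r lam m = series_mat m (\<lambda>i _. fps_powr (phi_fps s r) (lam i))"
  unfolding P_mat_def series_mat_def beta_diff ..

lemma Q_mat_eq_series_mat: "Q_mat s r mu m = series_mat m (\<lambda>_ j. fps_powr (phi_fps s r) (mu j))"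
  unfolding Q_mat_def series_mat_def beta_diff ..

lemma S_mat_eq_series_mat: "S_mat m psi = series_mat m (\<lambda>_ _. psi)"
  unfolding S_mat_def series_mat_def ..

lemma P_mat_S_mat_Q_mat:
  fixes c :: "'a::field_char_0"
  assumes "c \<noteq> 0" and exponents: "\<And>i k. k \<le> i \<Longrightarrow> lam i + mu k = of_nat (i - k) / c"
  shows "P_mat s r lam m * S_mat m (fps_const c - fps_X * fps_deriv (phi_fps s r) / phi_fps s r)
      * Q_mat s r mu m = c \<cdot>\<^sub>m 1\<^sub>m m"
proof -
  let ?phi = "phi_fps s r"
  let ?psi = "fps_const c - fps_X * fps_deriv ?phi / ?phi"
  have "P_mat s r lam m * S_mat m ?psi * Q_mat s r mu m
      = series_mat m (\<lambda>i k. fps_powr ?phi (lam i) * ?psi * fps_powr ?phi (mu k))"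
    by (simp add: P_mat_eq_series_mat S_mat_eq_series_mat Q_mat_eq_series_mat series_mat_mult)
  also have "\<dots> = mat_diag m (\<lambda>_. c)"
    using fps_nth_powr_mult_shifted_log_deriv[OF phi_fps_nth_0 assms(1) exponents]
    by (intro series_mat_eq_mat_diag) (simp add: ac_simps)
  also have "\<dots> = c \<cdot>\<^sub>m 1\<^sub>m m"
    by (rule eq_matI) (simp_all add: mat_diag_def)
  finally show ?thesis .
qed

lemma P_mat_diag_Q_mat:
  fixes c :: "'a::field_char_0"
  assumes "c \<noteq> 0" and exponents: "\<And>i k. k \<le> i \<Longrightarrow> lam i + mu k = of_nat (i - k) / c"
  shows "P_mat s r lam m * mat_diag m (\<lambda>k. c * mu k) * Q_mat s r mu m = mat_diag m (\<lambda>k. c * mu k)"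
proof -
  let ?phi = "phi_fps s r"
  let ?psi = "fps_const c - fps_X * fps_deriv ?phi / ?phi"
  have affine: "c * mu l = c * mu k - of_nat (l - k)" if "k \<le> l" for k l
  proof -
    have "lam l = - mu l" using exponents[of l l] by (simp add: eq_neg_iff_add_eq_0)
    then have "c * mu k - c * mu l = of_nat (l - k)"
      using exponents[OF that] assms(1) by (simp add: field_simps)
    from this[symmetric] show ?thesis by (simp add: algebra_simps)
  qed
  have euler: "fps_const (c * mu k) * fps_powr ?phi (mu k) - fps_X * fps_deriv (fps_powr ?phi (mu k))
      = fps_const (mu k) * (fps_powr ?phi (mu k) * ?psi)" for k
    by (simp add: fps_powr_euler[OF phi_fps_nth_0] algebra_simps)
  have "P_mat s r lam m * mat_diag m (\<lambda>k. c * mu k) * Q_mat s r mu m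
      = P_mat s r lam m * (mat_diag m (\<lambda>k. c * mu k) * Q_mat s r mu m)"
    by (rule assoc_mult_mat[of _ m m _ m _ m]) (simp_all add: P_mat_def Q_mat_def)
  also have "\<dots> = series_mat m
      (\<lambda>i k. fps_powr ?phi (lam i) * (fps_const (mu k) * (fps_powr ?phi (mu k) * ?psi)))"
    by (simp add: P_mat_eq_series_mat Q_mat_eq_series_mat mat_diag_mult_series_mat affine euler
        series_mat_mult)
  also have "\<dots> = mat_diag m (\<lambda>k. c * mu k)"
    using fps_nth_powr_mult_shifted_log_deriv[OF phi_fps_nth_0 assms(1) exponents]
    by (intro series_mat_eq_mat_diag) (simp add: ac_simps fps_mult_left_const_nth)
  finally show ?thesis .
qed

theorem lemma12:
  fixes s :: "nat \<Rightarrow> 'a::field_char_0" and r m :: nat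
  assumes "r \<ge> 2" and "m \<ge> 1"
  shows "(P_mat s r (\<lambda>i. - (of_int (int r - int (i+1)) / of_nat r)) m
           * S_mat m (fps_const (of_nat r) - fps_X * fps_deriv (phi_fps s r) / phi_fps s r)
           * Q_mat s r (\<lambda>j. of_int (int r - int (j+1)) / of_nat r) m
         = of_nat r \<cdot>\<^sub>m 1\<^sub>m m)
       \<and> (P_mat s r (\<lambda>i. - (of_int (int r - int (i+1)) / of_nat r)) m
           * mat_diag m (\<lambda>i. of_int (int r - int (i+1)))
           * Q_mat s r (\<lambda>j. of_int (int r - int (j+1)) / of_nat r) m
         = mat_diag m (\<lambda>i. (of_int (int r - int (i+1)) :: 'a)))"
proof -
  define mu :: "nat \<Rightarrow> 'a" where "mu j = of_int (int r - int (j + 1)) / of_nat r" for j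
  have r: "(of_nat r :: 'a) \<noteq> 0" using assms(1) by simp
  have exponents: "- mu i + mu k = of_nat (i - k) / of_nat r" if "k \<le> i" for i k
    using that by (simp add: mu_def of_nat_diff diff_divide_distrib[symmetric])
  have diag: "(\<lambda>i. of_int (int r - int (i + 1)) :: 'a) = (\<lambda>k. of_nat r * mu k)"
    using r by (simp add: mu_def)
  show ?thesis
    unfolding mu_def[symmetric] diag
    using P_mat_S_mat_Q_mat[OF r exponents] P_mat_diag_Q_mat[OF r exponents] by blast
qed

end
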